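(* Let $\mathbf G$ be a connected reductive complex algebraic group with split real form $G=\mathbf G^\sigma$ (identity component $G_0$), let $\mathbf X$ be a strict wonderful $\mathbf G$-variety of rank $r$ with real locus $X$, and let $P=P^uL$, $T$, $Z\cong\mathbb R^r$, the spherical roots $\gamma_1,\dots,\gamma_r$, and the charts $(U_g,\phi_g^{-1})$, $g\in G_0$, be as described in the context. For $x\in U_g$ let $z_j(x)$ denote the $(s+j)$-th component of $\phi_g^{-1}(x)\in\mathbb R^{s+r}$, and for $h\in G_0$ with $h\cdot x\in U_g$ let $\chi_j(h,x)$ be defined by $z_j(h\cdot x)=\chi_j(h,x)z_j(x)$. Then for any $g\in G_0$, $t\in T$, $u\in P^u$, $x\in U_g$ and $j=1,\dots,r$: (a) $z_j(gtg^{-1}\cdot x)=\chi_j(gtg^{-1},x)\,z_j(x)=\gamma_j(t)\,z_j(x)$; (b) $z_j(gug^{-1}\cdot x)=z_j(x)$.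
   Context: Let $\mathbf G$ be a connected reductive complex algebraic group, $\sigma$ an anti-holomorphic involution of $\mathbf G$ defining a split real form $G=\mathbf G^\sigma=\{g\in\mathbf G:\sigma(g)=g\}$, and $G_0$ the identity component of $G$. Fix a $\sigma$-stable maximal torus $\mathbf T$ and a $\sigma$-stable Borel subgroup $\mathbf B\supset\mathbf T$; put $T=\mathbf T^\sigma$, $B=\mathbf B^\sigma$. A $\mathbf G$-variety $\mathbf X$ is wonderful of rank $r$ if it is smooth projective, has an open $\mathbf G$-orbit whose complement is a union of smooth prime divisors $\mathbf X_1,\dots,\mathbf X_r$ with normal crossings, and the $\mathbf G$-orbit closures are exactly the partial intersections of the $\mathbf X_i$; it is strict if all its points have self-normalizing stabilizers. A strict wonderful $\mathbf G$-variety carries a unique $\sigma$-equivariant real structure $\mu$ (an anti-holomorphic involution with $\mu(g\cdot x)=\sigma(g)\cdot\mu(x)$); its real locus $X$ is a nonempty smooth projective real algebraic $G_0$-variety with a unique closed $G_0$-orbit $Y$. Let $P\supset B$ be the standard parabolic subgroup with $Y\cong G_0/P_0$, and $P=P^uL$ its Levi decomposition with $T\subset L$; $P^u$ is connected and diffeomorphic to $\mathbb R^s$, with coordinates $p_1,\dots,p_s$. By the local structure theorem of Akhiezer–Cupit-Foutou there is a real algebraic $L$-subvariety $Z\subset X$ such that $P^u\times Z\to P^u\cdot Z$, $(p,z)\mapsto p\cdot z$, is a $P^u$-equivariant isomorphism onto an open subset of $X$, every $G_0$-orbit meets $Z$, the commutator $(L,L)$ acts trivially on $Z$, and $Z\cong\mathbb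 R^r$ (coordinates $z_1,\dots,z_r$) with $T$ acting by $t\cdot z=(\gamma_1(t)z_1,\dots,\gamma_r(t)z_r)$ for linearly independent characters $\gamma_1,\dots,\gamma_r$ of $T$ (the spherical roots). $L$ acts on $P^u\cdot Z$ by $l\cdot(p_u\cdot z)=(lp_ul^{-1})\cdot(l\cdot z)$. Let $\phi:\mathbb R^{s+r}\to P^u\cdot Z$ be the real-analytic diffeomorphism $(p_1,\dots,p_s,z_1,\dots,z_r)\mapsto p\cdot z$, and for $g\in G_0$ set $U_g=g\cdot(P^u\cdot Z)$ and $\phi_g=g\circ\phi:\mathbb R^{s+r}\to U_g$. *)

theory Defs
  imports "HOL-Analysis.Analysis" "HOL-Algebra.Group"
begin

text \<open>Real coordinate space R^n, represented by functions nat => real vanishing from index n on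
  (coordinates are indexed 0,...,n-1).\<close>
definition vecs :: "nat \<Rightarrow> (nat \<Rightarrow> real) set" where
  "vecs n = {v. \<forall>i\<ge>n. v i = 0}"

definition chart :: "('g \<Rightarrow> 'x \<Rightarrow> 'x) \<Rightarrow> ((nat \<Rightarrow> real) \<Rightarrow> 'g) \<Rightarrow> ((nat \<Rightarrow> real) \<Rightarrow> 'x)
    \<Rightarrow> nat \<Rightarrow> nat \<Rightarrow> 'g \<Rightarrow> (nat \<Rightarrow> real) \<Rightarrow> 'x" where
  "chart act pu_of z_of s r g v =
     act g (act (pu_of (\<lambda>i. if i < s then v i else 0)) (z_of (\<lambda>j. if j < r then v (s + j) else 0)))"

definition chart_dom :: "('g \<Rightarrow> 'x \<Rightarrow> 'x) \<Rightarrow> ((nat \<Rightarrow> real) \<Rightarrow> 'g) \<Rightarrow> ((nat \<Rightarrow> real) \<Rightarrow> 'x)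
    \<Rightarrow> nat \<Rightarrow> nat \<Rightarrow> 'g \<Rightarrow> 'x set" where
  "chart_dom act pu_of z_of s r g = chart act pu_of z_of s r g ` vecs (s + r)"

text \<open>z_j(x): the (s+j)-th component of phi_g^{-1}(x) (0-based j, so j < r).\<close>
definition zc :: "('g \<Rightarrow> 'x \<Rightarrow> 'x) \<Rightarrow> ((nat \<Rightarrow> real) \<Rightarrow> 'g) \<Rightarrow> ((nat \<Rightarrow> real) \<Rightarrow> 'x)
    \<Rightarrow> nat \<Rightarrow> nat \<Rightarrow> 'g \<Rightarrow> nat \<Rightarrow> 'x \<Rightarrow> real" where
  "zc act pu_of z_of s r g j x =
     the_inv_into (vecs (s + r)) (chart act pu_of z_of s r g) x (s + j)"

definition chi :: "('g \<Rightarrow> 'x \<Rightarrow> 'x) \<Rightarrow> ((nat \<Rightarrow> real) \<Rightarrow> 'g) \<Rightarrow> ((nat \<Rightarrow> real) \<Rightarrow> 'x)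
    \<Rightarrow> nat \<Rightarrow> nat \<Rightarrow> 'g \<Rightarrow> nat \<Rightarrow> 'g \<Rightarrow> 'x \<Rightarrow> real" where
  "chi act pu_of z_of s r g j h x =
     zc act pu_of z_of s r g j (act h x) / zc act pu_of z_of s r g j x"

definition group_act :: "('g, 'b) monoid_scheme \<Rightarrow> 'x set \<Rightarrow> ('g \<Rightarrow> 'x \<Rightarrow> 'x) \<Rightarrow> bool" where
  "group_act G X act \<longleftrightarrow> group G \<and>
     (\<forall>g\<in>carrier G. \<forall>x\<in>X. act g x \<in> X) \<and>
     (\<forall>x\<in>X. act \<one>\<^bsub>G\<^esub> x = x) \<and>
     (\<forall>g\<in>carrier G. \<forall>h\<in>carrier G. \<forall>x\<in>X. act (g \<otimes>\<^bsub>G\<^esub> h) x = act g (act h x))"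

text \<open>The data of the local structure theorem (Akhiezer--Cupit-Foutou), as listed in the context.\<close>
definition local_structure ::
  "('g, 'b) monoid_scheme \<Rightarrow> 'g set \<Rightarrow> 'g set \<Rightarrow> 'g set \<Rightarrow> 'g set \<Rightarrow> 'x::topological_space set
   \<Rightarrow> ('g \<Rightarrow> 'x \<Rightarrow> 'x) \<Rightarrow> nat \<Rightarrow> nat \<Rightarrow> ((nat \<Rightarrow> real) \<Rightarrow> 'g) \<Rightarrow> ((nat \<Rightarrow> real) \<Rightarrow> 'x)
   \<Rightarrow> (nat \<Rightarrow> 'g \<Rightarrow> real) \<Rightarrow> bool" where
  "local_structure G G0 T L Pu X act s r pu_of z_of \<gamma> \<longleftrightarrow>
     group_act G X act \<and>
     subgroup G0 G \<and> subgroup T G \<and> subgroup L G \<and> subgroup Pu G \<and>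
     T \<subseteq> L \<and>
     (\<forall>l\<in>L. \<forall>u\<in>Pu. l \<otimes>\<^bsub>G\<^esub> u \<otimes>\<^bsub>G\<^esub> inv\<^bsub>G\<^esub> l \<in> Pu) \<and>
     bij_betw pu_of (vecs s) Pu \<and>
     bij_betw z_of (vecs r) (z_of ` vecs r) \<and>
     z_of ` vecs r \<subseteq> X \<and>
     inj_on (\<lambda>(p, z). act p z) (Pu \<times> z_of ` vecs r) \<and>
     openin (top_of_set X) ((\<lambda>(p, z). act p z) ` (Pu \<times> z_of ` vecs r)) \<and>
     (\<forall>l\<in>L. \<forall>z\<in>z_of ` vecs r. act l z \<in> z_of ` vecs r) \<and>
     (\<forall>x\<in>X. \<exists>g\<in>G0. act g x \<in> z_of ` vecs r) \<and>
     (\<forall>a\<in>L. \<forall>b\<in>L. \<forall>z\<in>z_of ` vecs r.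
        act (a \<otimes>\<^bsub>G\<^esub> b \<otimes>\<^bsub>G\<^esub> inv\<^bsub>G\<^esub> a \<otimes>\<^bsub>G\<^esub> inv\<^bsub>G\<^esub> b) z = z) \<and>
     (\<forall>j<r. \<forall>t\<in>T. \<gamma> j t \<noteq> 0) \<and>
     (\<forall>j<r. \<forall>t1\<in>T. \<forall>t2\<in>T. \<gamma> j (t1 \<otimes>\<^bsub>G\<^esub> t2) = \<gamma> j t1 * \<gamma> j t2) \<and>
     (\<forall>n::nat \<Rightarrow> int. (\<forall>t\<in>T. (\<Prod>j<r. \<gamma> j t powi n j) = 1) \<longrightarrow> (\<forall>j<r. n j = 0)) \<and>
     (\<forall>t\<in>T. \<forall>v\<in>vecs r. act t (z_of v) = z_of (\<lambda>j. if j < r then \<gamma> j t * v j else 0))"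

end

theory Submission
  imports Defs
begin

text \<open>A point of \<open>U\<^sub>g\<close> is \<open>g \<cdot> (p \<cdot> z)\<close> with unique \<open>p \<in> P\<^sup>u\<close>, \<open>z \<in> Z\<close>, and its coordinates
  \<open>z\<^sub>j\<close> are those of \<open>z\<close>. Moving \<open>g t g\<^sup>-\<^sup>1\<close> past \<open>g\<close> turns it into \<open>t\<close>, and
  \<open>t \<cdot> (p \<cdot> z) = (t p t\<^sup>-\<^sup>1) \<cdot> (t \<cdot> z)\<close> with \<open>t p t\<^sup>-\<^sup>1 \<in> P\<^sup>u\<close> because \<open>T \<subseteq> L\<close> normalises \<open>P\<^sup>u\<close>;
  so only the \<open>Z\<close>-component changes, by the spherical roots. Likewise \<open>g u g\<^sup>-\<^sup>1\<close> only
  replaces \<open>p\<close> by \<open>u p\<close> and leaves \<open>z\<close> untouched.\<close>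

definition join_vecs :: "nat \<Rightarrow> nat \<Rightarrow> (nat \<Rightarrow> real) \<Rightarrow> (nat \<Rightarrow> real) \<Rightarrow> nat \<Rightarrow> real" where
  "join_vecs s r p w = (\<lambda>i. if i < s then p i else if i < s + r then w (i - s) else 0)"

lemma join_vecs_in_vecs: "join_vecs s r p w \<in> vecs (s + r)"
  by (simp add: join_vecs_def vecs_def)

lemma join_vecs_nth_add: "j < r \<Longrightarrow> join_vecs s r p w (s + j) = w j"
  by (simp add: join_vecs_def)

lemma vecs_add_split:
  assumes "v \<in> vecs (s + r)"
  obtains p w where "p \<in> vecs s" "w \<in> vecs r" "v = join_vecs s r p w"
proof
  show "(\<lambda>i. if i < s then v i else 0) \<in> vecs s" "(\<lambda>j. if j < r then v (s + j) else 0) \<in> vecs r"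
    by (simp_all add: vecs_def)
  show "v = join_vecs s r (\<lambda>i. if i < s then v i else 0) (\<lambda>j. if j < r then v (s + j) else 0)"
    using assms by (auto simp: join_vecs_def vecs_def intro!: ext)
qed

lemma chart_join_vecs:
  assumes "p \<in> vecs s" "w \<in> vecs r"
  shows "chart act pu_of z_of s r g (join_vecs s r p w) = act g (act (pu_of p) (z_of w))"
proof -
  have "(\<lambda>i. if i < s then join_vecs s r p w i else 0) = p"
    "(\<lambda>j. if j < r then join_vecs s r p w (s + j) else 0) = w"
    using assms by (auto simp: join_vecs_def vecs_def intro!: ext)
  then show ?thesis by (simp add: chart_def)
qed

lemma chart_dom_iff:
  "x \<in> chart_dom act pu_of z_of s r g \<longleftrightarrow>
     (\<exists>p\<in>vecs s. \<exists>w\<in>vecs r. x = act g (act (pu_of p) (z_of w)))"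
proof
  assume "x \<in> chart_dom act pu_of z_of s r g"
  then obtain v where "v \<in> vecs (s + r)" "x = chart act pu_of z_of s r g v"
    by (auto simp: chart_dom_def)
  then show "\<exists>p\<in>vecs s. \<exists>w\<in>vecs r. x = act g (act (pu_of p) (z_of w))"
    by (metis vecs_add_split chart_join_vecs)
next
  assume "\<exists>p\<in>vecs s. \<exists>w\<in>vecs r. x = act g (act (pu_of p) (z_of w))"
  then show "x \<in> chart_dom act pu_of z_of s r g"
    unfolding chart_dom_def by (metis chart_join_vecs image_eqI join_vecs_in_vecs)
qed

lemma group_act_mult:
  "\<lbrakk>group_act G X act; a \<in> carrier G; b \<in> carrier G; y \<in> X\<rbrakk>
     \<Longrightarrow> act (a \<otimes>\<^bsub>G\<^esub> b) y = act a (act b y)"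
  by (simp add: group_act_def)

lemma group_act_closed: "\<lbrakk>group_act G X act; a \<in> carrier G; y \<in> X\<rbrakk> \<Longrightarrow> act a y \<in> X"
  by (simp add: group_act_def)

lemma group_act_inv_cancel:
  assumes "group_act G X act" "a \<in> carrier G" "y \<in> X"
  shows "act (inv\<^bsub>G\<^esub> a) (act a y) = y"
proof -
  interpret group G using assms(1) by (simp add: group_act_def)
  show ?thesis
    using assms group_act_mult[OF assms(1) inv_closed[OF assms(2)] assms(2) assms(3)]
    by (simp add: group_act_def)
qed

lemma group_act_conj:
  assumes "group_act G X act" "a \<in> carrier G" "h \<in> carrier G" "y \<in> X"
  shows "act (a \<otimes>\<^bsub>G\<^esub> h \<otimes>\<^bsub>G\<^esub> inv\<^bsub>G\<^esub> a) (act a y) = act a (act h y)"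
proof -
  interpret group G using assms(1) by (simp add: group_act_def)
  have "a \<otimes>\<^bsub>G\<^esub> h \<otimes>\<^bsub>G\<^esub> inv\<^bsub>G\<^esub> a \<otimes>\<^bsub>G\<^esub> a = a \<otimes>\<^bsub>G\<^esub> h"
    using assms(2,3) by (simp add: m_assoc)
  then show ?thesis
    using assms group_act_mult[OF assms(1)] by (metis inv_closed m_closed)
qed

lemma chi_mult_zc:
  assumes "zc act pu_of z_of s r g j (act h x) = c * zc act pu_of z_of s r g j x"
  shows "chi act pu_of z_of s r g j h x * zc act pu_of z_of s r g j x
           = zc act pu_of z_of s r g j (act h x)"
  using assms by (cases "zc act pu_of z_of s r g j x = 0") (simp_all add: chi_def)

locale chart_data =
  fixes G :: "('g, 'b) monoid_scheme" and X :: "'x set" and act :: "'g \<Rightarrow> 'x \<Rightarrow> 'x"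
    and Pu :: "'g set" and s r :: nat
    and pu_of :: "(nat \<Rightarrow> real) \<Rightarrow> 'g" and z_of :: "(nat \<Rightarrow> real) \<Rightarrow> 'x"
  assumes group_act: "group_act G X act"
    and subgroup_Pu: "subgroup Pu G"
    and bij_pu_of: "bij_betw pu_of (vecs s) Pu"
    and inj_z_of: "inj_on z_of (vecs r)"
    and z_of_in_X: "z_of ` vecs r \<subseteq> X"
    and inj_act_Pu_Z: "inj_on (\<lambda>(p, z). act p z) (Pu \<times> z_of ` vecs r)"
begin

abbreviation U :: "'g \<Rightarrow> 'x set" where
  "U g \<equiv> chart_dom act pu_of z_of s r g"

abbreviation zcoord :: "'g \<Rightarrow> nat \<Rightarrow> 'x \<Rightarrow> real" where
  "zcoord g j \<equiv> zc act pu_of z_of s r g j"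

lemma pu_of_in_Pu: "p \<in> vecs s \<Longrightarrow> pu_of p \<in> Pu"
  using bij_pu_of by (auto simp: bij_betw_def)

lemma pu_of_in_carrier: "p \<in> vecs s \<Longrightarrow> pu_of p \<in> carrier G"
  using pu_of_in_Pu subgroup.subset[OF subgroup_Pu] by blast

lemma act_pu_of_z_of_in_X: "\<lbrakk>p \<in> vecs s; w \<in> vecs r\<rbrakk> \<Longrightarrow> act (pu_of p) (z_of w) \<in> X"
  using group_act_closed[OF group_act pu_of_in_carrier] z_of_in_X by blast

lemma Pu_pu_ofE:
  assumes "q \<in> Pu"
  obtains p where "p \<in> vecs s" "pu_of p = q"
  using assms bij_pu_of by (auto simp: bij_betw_def)

lemma act_pu_of_z_of_inj:
  assumes "p \<in> vecs s" "w \<in> vecs r" "p' \<in> vecs s" "w' \<in> vecs r"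
    and "act (pu_of p) (z_of w) = act (pu_of p') (z_of w')"
  shows "p = p'" "w = w'"
proof -
  have "pu_of p \<in> Pu" "pu_of p' \<in> Pu"
    using assms pu_of_in_Pu by blast+
  then have "pu_of p = pu_of p' \<and> z_of w = z_of w'"
    using inj_act_Pu_Z assms by (auto simp: inj_on_def)
  then show "p = p'" "w = w'"
    using assms bij_pu_of inj_z_of by (auto simp: bij_betw_def inj_on_def)
qed

lemma inj_chart:
  assumes "g \<in> carrier G"
  shows "inj_on (chart act pu_of z_of s r g) (vecs (s + r))"
proof (rule inj_onI)
  fix v v' assume "v \<in> vecs (s + r)" "v' \<in> vecs (s + r)"
    and eq: "chart act pu_of z_of s r g v = chart act pu_of z_of s r g v'"
  then obtain p w p' w' where pw: "p \<in> vecs s" "w \<in> vecs r" "v = join_vecs s r p w"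
    and pw': "p' \<in> vecs s" "w' \<in> vecs r" "v' = join_vecs s r p' w'"
    by (metis vecs_add_split)
  have "act g (act (pu_of p) (z_of w)) = act g (act (pu_of p') (z_of w'))"
    using eq pw pw' by (simp add: chart_join_vecs)
  then have "act (pu_of p) (z_of w) = act (pu_of p') (z_of w')"
    using group_act_inv_cancel[OF group_act assms] act_pu_of_z_of_in_X pw pw' by metis
  then show "v = v'"
    using act_pu_of_z_of_inj pw pw' by metis
qed

lemma zcoord_chart:
  assumes "g \<in> carrier G" "p \<in> vecs s" "w \<in> vecs r" "j < r"
  shows "zcoord g j (act g (act (pu_of p) (z_of w))) = w j"
proof -
  have "zcoord g j (chart act pu_of z_of s r g (join_vecs s r p w)) = join_vecs s r p w (s + j)"
    using the_inv_into_f_f[OF inj_chart[OF assms(1)] join_vecs_in_vecs] by (simp add: zc_def)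
  then show ?thesis
    by (simp add: chart_join_vecs[OF assms(2,3)] join_vecs_nth_add[OF assms(4)])
qed

lemma conj_act_chart:
  assumes "g \<in> carrier G" "h \<in> carrier G" "j < r"
    and "p \<in> vecs s" "w \<in> vecs r" "p' \<in> vecs s" "w' \<in> vecs r"
    and h: "act h (act (pu_of p) (z_of w)) = act (pu_of p') (z_of w')"
  shows "act (g \<otimes>\<^bsub>G\<^esub> h \<otimes>\<^bsub>G\<^esub> inv\<^bsub>G\<^esub> g) (act g (act (pu_of p) (z_of w))) \<in> U g
    \<and> zcoord g j (act (g \<otimes>\<^bsub>G\<^esub> h \<otimes>\<^bsub>G\<^esub> inv\<^bsub>G\<^esub> g) (act g (act (pu_of p) (z_of w)))) = w' j"
proof -
  have "act (g \<otimes>\<^bsub>G\<^esub> h \<otimes>\<^bsub>G\<^esub> inv\<^bsub>G\<^esub> g) (act g (act (pu_of p) (z_of w)))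
      = act g (act (pu_of p') (z_of w'))"
    using group_act_conj[OF group_act assms(1,2) act_pu_of_z_of_in_X[OF assms(4,5)]] h by simp
  moreover have "act g (act (pu_of p') (z_of w')) \<in> U g"
    unfolding chart_dom_iff using assms(6,7) by blast
  ultimately show ?thesis
    using zcoord_chart[OF assms(1,6,7,3)] by simp
qed

lemma act_Pu_in_chart:
  assumes "g \<in> carrier G" "x \<in> U g" "u \<in> Pu" "j < r"
  shows "act (g \<otimes>\<^bsub>G\<^esub> u \<otimes>\<^bsub>G\<^esub> inv\<^bsub>G\<^esub> g) x \<in> U g
    \<and> zcoord g j (act (g \<otimes>\<^bsub>G\<^esub> u \<otimes>\<^bsub>G\<^esub> inv\<^bsub>G\<^esub> g) x) = zcoord g j x"
proof -
  obtain p w where pw: "p \<in> vecs s" "w \<in> vecs r" and x: "x = act g (act (pu_of p) (z_of w))"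
    using assms(2) unfolding chart_dom_iff by blast
  have uG: "u \<in> carrier G" using assms(3) subgroup.subset[OF subgroup_Pu] by blast
  obtain p' where p': "p' \<in> vecs s" "pu_of p' = u \<otimes>\<^bsub>G\<^esub> pu_of p"
    using Pu_pu_ofE subgroup.m_closed[OF subgroup_Pu assms(3) pu_of_in_Pu[OF pw(1)]] by blast
  have "act u (act (pu_of p) (z_of w)) = act (pu_of p') (z_of w)"
    using group_act_mult[OF group_act uG pu_of_in_carrier[OF pw(1)]] p' pw(2) z_of_in_X by auto
  then show ?thesis
    using conj_act_chart[OF assms(1) uG assms(4) pw p'(1) pw(2)] zcoord_chart[OF assms(1) pw assms(4)] x
    by simp
qed

lemma act_normalizing_in_chart:
  assumes "g \<in> carrier G" "x \<in> U g" "j < r" "h \<in> carrier G"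
    and normalizes: "\<And>q. q \<in> Pu \<Longrightarrow> h \<otimes>\<^bsub>G\<^esub> q \<otimes>\<^bsub>G\<^esub> inv\<^bsub>G\<^esub> h \<in> Pu"
    and scales: "\<And>w. w \<in> vecs r \<Longrightarrow> act h (z_of w) = z_of (\<lambda>i. if i < r then c i * w i else 0)"
  shows "act (g \<otimes>\<^bsub>G\<^esub> h \<otimes>\<^bsub>G\<^esub> inv\<^bsub>G\<^esub> g) x \<in> U g
    \<and> zcoord g j (act (g \<otimes>\<^bsub>G\<^esub> h \<otimes>\<^bsub>G\<^esub> inv\<^bsub>G\<^esub> g) x) = c j * zcoord g j x"
proof -
  obtain p w where pw: "p \<in> vecs s" "w \<in> vecs r" and x: "x = act g (act (pu_of p) (z_of w))"
    using assms(2) unfolding chart_dom_iff by blast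
  define w' where "w' = (\<lambda>i. if i < r then c i * w i else 0)"
  have w': "w' \<in> vecs r" by (simp add: w'_def vecs_def)
  obtain p' where p': "p' \<in> vecs s" "pu_of p' = h \<otimes>\<^bsub>G\<^esub> pu_of p \<otimes>\<^bsub>G\<^esub> inv\<^bsub>G\<^esub> h"
    using Pu_pu_ofE normalizes[OF pu_of_in_Pu[OF pw(1)]] by blast
  have zX: "z_of w \<in> X" using pw z_of_in_X by blast
  have "act h (act (pu_of p) (z_of w)) = act (pu_of p') (act h (z_of w))"
    using group_act_conj[OF group_act assms(4) pu_of_in_carrier[OF pw(1)] zX] p' by simp
  also have "\<dots> = act (pu_of p') (z_of w')"
    using scales[OF pw(2)] by (simp add: w'_def)
  finally show ?thesis
    using conj_act_chart[OF assms(1,4,3) pw p'(1) w'] zcoord_chart[OF assms(1) pw assms(3)] x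
    by (simp add: w'_def assms(3))
qed

end

theorem corollary4:
  fixes G :: "('g, 'b) monoid_scheme" and G0 T L Pu :: "'g set"
    and X :: "'x::topological_space set" and act :: "'g \<Rightarrow> 'x \<Rightarrow> 'x"
    and s r :: nat and pu_of :: "(nat \<Rightarrow> real) \<Rightarrow> 'g" and z_of :: "(nat \<Rightarrow> real) \<Rightarrow> 'x"
    and \<gamma> :: "nat \<Rightarrow> 'g \<Rightarrow> real"
  assumes LS: "local_structure G G0 T L Pu X act s r pu_of z_of \<gamma>"
    and g: "g \<in> G0" and t: "t \<in> T" and u: "u \<in> Pu"
    and x: "x \<in> chart_dom act pu_of z_of s r g" and j: "j < r"
  shows "act (g \<otimes>\<^bsub>G\<^esub> t \<otimes>\<^bsub>G\<^esub> inv\<^bsub>G\<^esub> g) x \<in> chart_dom act pu_of z_of s r g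
       \<and> zc act pu_of z_of s r g j (act (g \<otimes>\<^bsub>G\<^esub> t \<otimes>\<^bsub>G\<^esub> inv\<^bsub>G\<^esub> g) x)
           = chi act pu_of z_of s r g j (g \<otimes>\<^bsub>G\<^esub> t \<otimes>\<^bsub>G\<^esub> inv\<^bsub>G\<^esub> g) x * zc act pu_of z_of s r g j x
       \<and> chi act pu_of z_of s r g j (g \<otimes>\<^bsub>G\<^esub> t \<otimes>\<^bsub>G\<^esub> inv\<^bsub>G\<^esub> g) x * zc act pu_of z_of s r g j x
           = \<gamma> j t * zc act pu_of z_of s r g j x
       \<and> act (g \<otimes>\<^bsub>G\<^esub> u \<otimes>\<^bsub>G\<^esub> inv\<^bsub>G\<^esub> g) x \<in> chart_dom act pu_of z_of s r g
       \<and> zc act pu_of z_of s r g j (act (g \<otimes>\<^bsub>G\<^esub> u \<otimes>\<^bsub>G\<^esub> inv\<^bsub>G\<^esub> g) x) = zc act pu_of z_of s r g j x"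
proof -
  have act: "group_act G X act" and sG0: "subgroup G0 G" and sT: "subgroup T G"
    and sPu: "subgroup Pu G" and TL: "T \<subseteq> L"
    and normal: "\<forall>l\<in>L. \<forall>q\<in>Pu. l \<otimes>\<^bsub>G\<^esub> q \<otimes>\<^bsub>G\<^esub> inv\<^bsub>G\<^esub> l \<in> Pu"
    and pu_of: "bij_betw pu_of (vecs s) Pu" and z_of: "bij_betw z_of (vecs r) (z_of ` vecs r)"
    and ZX: "z_of ` vecs r \<subseteq> X" and inj: "inj_on (\<lambda>(p, z). act p z) (Pu \<times> z_of ` vecs r)"
    and roots: "\<forall>t\<in>T. \<forall>v\<in>vecs r. act t (z_of v) = z_of (\<lambda>j. if j < r then \<gamma> j t * v j else 0)"
    using LS unfolding local_structure_def by simp_all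
  interpret chart_data G X act Pu s r pu_of z_of
    using act sPu pu_of z_of ZX inj by (simp add: chart_data_def bij_betw_def)
  have gG: "g \<in> carrier G" and tG: "t \<in> carrier G"
    using g t subgroup.subset[OF sG0] subgroup.subset[OF sT] by blast+
  have torus: "act (g \<otimes>\<^bsub>G\<^esub> t \<otimes>\<^bsub>G\<^esub> inv\<^bsub>G\<^esub> g) x \<in> U g
      \<and> zcoord g j (act (g \<otimes>\<^bsub>G\<^esub> t \<otimes>\<^bsub>G\<^esub> inv\<^bsub>G\<^esub> g) x) = \<gamma> j t * zcoord g j x"
    by (rule act_normalizing_in_chart[OF gG x j tG]) (use normal roots TL t in auto)
  have chi: "chi act pu_of z_of s r g j (g \<otimes>\<^bsub>G\<^esub> t \<otimes>\<^bsub>G\<^esub> inv\<^bsub>G\<^esub> g) x * zcoord g j x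
      = zcoord g j (act (g \<otimes>\<^bsub>G\<^esub> t \<otimes>\<^bsub>G\<^esub> inv\<^bsub>G\<^esub> g) x)"
    by (rule chi_mult_zc) (use torus in blast)
  show ?thesis
    using torus act_Pu_in_chart[OF gG x u j] by (simp add: chi)
qed

end
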